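(* Let $H\le G_{d,k}$. Every $(d-1)$-multicell of $\widetilde{\mathfrak X}_{d,k}(H)$ is contained in exactly $k$ $d$-multicells if and only if $\langle\alpha_i\rangle\cap gHg^{-1}=\{e\}$ for all $i\in[\![d]\!]$ and $g\in G_{d,k}$. In particular, if $H\trianglelefteq G_{d,k}$, this holds if and only if for every $i\in[\![d]\!]$ the image of $\alpha_i$ in $G_{d,k}/H$ has order exactly $k$.
   Context: Fix $d,k\ge1$, $[\![d]\!]=\{0,\dots,d\}$. $G_{d,k}=\langle\alpha_0,\dots,\alpha_d\mid\alpha_i^k=e\rangle$; for $J\subseteq[\![d]\!]$, $K_J=\langle\alpha_j:j\in J\rangle$, $\widehat J=[\![d]\!]\setminus J$. For $H\le G_{d,k}$, $[K_{\widehat J}g]_H=\{K_{\widehat J}gh:h\in H\}$. The multicomplex $\widetilde{\mathfrak X}_{d,k}(H)$ has as multicells of dimension $|J|-1$ the classes $[K_{\widehat J}g]_H$, with containment $[K_{\widehat I}g]_H\preceq[K_{\widehat J}g]_H$ for $I\subseteq J$. Its $d$-multicells are the $[g]_H=\{gh:h\in H\}$ and its $(d-1)$-multicells are the $[K_{\{i\}}g]_H$; the $d$-multicells containing $[K_{\{i\}}g]_H$ are the classes $[g']_H$ with $[K_{\{i\}}g']_H=[K_{\{i\}}g]_H$. *)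

theory Defs
  imports "HOL-Algebra.Algebra"
begin

section \<open>The free product G_{d,k} of d+1 cyclic groups of order k (reduced-word model)\<close>

text \<open>A word is a list of letters (i, a) standing for alpha_i^a.  A word is reduced if every
  letter has index i <= d, exponent 0 < a < k, and adjacent letters have distinct indices.\<close>

definition reduced_word :: "nat \<Rightarrow> nat \<Rightarrow> (nat \<times> nat) list \<Rightarrow> bool" where
  "reduced_word d k w \<longleftrightarrow>
     (\<forall>(i, a) \<in> set w. i \<le> d \<and> 0 < a \<and> a < k) \<and>
     (\<forall>n. Suc n < length w \<longrightarrow> fst (w ! n) \<noteq> fst (w ! Suc n))"

definition ins_letter :: "nat \<Rightarrow> nat \<Rightarrow> nat \<Rightarrow> (nat \<times> nat) list \<Rightarrow> (nat \<times> nat) list" where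
  "ins_letter k i a w =
     (if a mod k = 0 then w else
      (case w of
         [] \<Rightarrow> [(i, a mod k)]
       | (j, b) # w' \<Rightarrow>
           (if i = j then (if (a + b) mod k = 0 then w' else (i, (a + b) mod k) # w')
            else (i, a mod k) # w)))"

definition word_mult :: "nat \<Rightarrow> (nat \<times> nat) list \<Rightarrow> (nat \<times> nat) list \<Rightarrow> (nat \<times> nat) list" where
  "word_mult k u v = foldr (\<lambda>(i, a) w. ins_letter k i a w) u v"

definition Gdk :: "nat \<Rightarrow> nat \<Rightarrow> (nat \<times> nat) list monoid" where
  "Gdk d k = \<lparr> carrier = {w. reduced_word d k w}, monoid.mult = word_mult k, one = [] \<rparr>"

definition alpha :: "nat \<Rightarrow> nat \<Rightarrow> (nat \<times> nat) list" where
  "alpha k i = ins_letter k i 1 []"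

definition Ksub :: "nat \<Rightarrow> nat \<Rightarrow> nat set \<Rightarrow> (nat \<times> nat) list set" where
  "Ksub d k J = generate (Gdk d k) (alpha k ` J)"

definition cell_class :: "nat \<Rightarrow> nat \<Rightarrow> (nat \<times> nat) list set \<Rightarrow> nat set \<Rightarrow> (nat \<times> nat) list
    \<Rightarrow> (nat \<times> nat) list set set" where
  "cell_class d k H J g =
     {(Ksub d k ({0..d} - J) #>\<^bsub>Gdk d k\<^esub> g) #>\<^bsub>Gdk d k\<^esub> h | h. h \<in> H}"

text \<open>A multicell of the multicomplex is recorded together with its index set J
  (its dimension is |J| - 1).\<close>
definition multicell :: "nat \<Rightarrow> nat \<Rightarrow> (nat \<times> nat) list set \<Rightarrow> nat set \<Rightarrow> (nat \<times> nat) list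
    \<Rightarrow> nat set \<times> (nat \<times> nat) list set set" where
  "multicell d k H J g = (J, cell_class d k H J g)"

definition multicell_le :: "nat \<Rightarrow> nat \<Rightarrow> (nat \<times> nat) list set
    \<Rightarrow> nat set \<times> (nat \<times> nat) list set set \<Rightarrow> nat set \<times> (nat \<times> nat) list set set \<Rightarrow> bool" where
  "multicell_le d k H \<sigma> \<tau> \<longleftrightarrow>
     (\<exists>I J g. I \<subseteq> J \<and> J \<subseteq> {0..d} \<and> g \<in> carrier (Gdk d k) \<and>
        \<sigma> = multicell d k H I g \<and> \<tau> = multicell d k H J g)"

definition top_cells :: "nat \<Rightarrow> nat \<Rightarrow> (nat \<times> nat) list set \<Rightarrow> (nat set \<times> (nat \<times> nat) list set set) set" where
  "top_cells d k H = {multicell d k H {0..d} g | g. g \<in> carrier (Gdk d k)}"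

definition facet_cells :: "nat \<Rightarrow> nat \<Rightarrow> (nat \<times> nat) list set \<Rightarrow> (nat set \<times> (nat \<times> nat) list set set) set" where
  "facet_cells d k H =
     {multicell d k H ({0..d} - {i}) g | i g. i \<le> d \<and> g \<in> carrier (Gdk d k)}"

end

theory Submission
  imports Defs
begin

text \<open>A top multicell \<open>[x]\<^sub>H\<close> is determined by the left coset \<open>xH\<close>, and the top multicells
  containing the facet \<open>[K\<^sub>i g]\<^sub>H\<close>, \<open>K\<^sub>i = \<langle>\<alpha>\<^sub>i\<rangle>\<close>, are the \<open>[x]\<^sub>H\<close> with \<open>x\<close> in the double coset
  \<open>K\<^sub>i g H\<close>, i.e. the cosets \<open>\<kappa>gH\<close> for \<open>\<kappa> \<in> K\<^sub>i\<close>. Since \<open>|K\<^sub>i| = k\<close>, the facet lies in exactly \<open>k\<close> of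
  them iff \<open>\<kappa> \<mapsto> \<kappa>gH\<close> is injective on \<open>K\<^sub>i\<close>, and \<open>\<kappa>gH = \<kappa>'gH\<close> iff \<open>\<kappa>'\<^sup>-\<^sup>1\<kappa> \<in> gHg\<^sup>-\<^sup>1\<close>; so this happens
  iff \<open>K\<^sub>i \<inter> gHg\<^sup>-\<^sup>1\<close> is trivial. For normal \<open>H\<close> the conjugates are \<open>H\<close> itself, and \<open>K\<^sub>i \<inter> H\<close> is
  trivial iff the image of \<open>\<alpha>\<^sub>i\<close> in \<open>G/H\<close> keeps the full order \<open>k\<close> of \<open>\<alpha>\<^sub>i\<close>.\<close>

section \<open>Cosets, conjugates and orders in quotient groups\<close>

context group
begin

lemma l_coset_eq_iff:
  assumes "subgroup H G" and "x \<in> carrier G" and "y \<in> carrier G"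
  shows "x <# H = y <# H \<longleftrightarrow> inv y \<otimes> x \<in> H"
proof
  assume "x <# H = y <# H"
  moreover have "x \<in> x <# H"
    using assms(1,2) subgroup.one_closed unfolding l_coset_def by fastforce
  ultimately have "x \<in> y <# H"
    by simp
  then obtain h where "h \<in> H" "x = y \<otimes> h"
    unfolding l_coset_def by blast
  then show "inv y \<otimes> x \<in> H"
    using assms by (metis inv_solve_left subgroup.mem_carrier)
next
  assume "inv y \<otimes> x \<in> H"
  then have "x \<in> y <# H"
    using subgroup.lcos_module_rev[OF assms(1) is_group assms(3,2)] by blast
  then show "x <# H = y <# H"
    using l_repr_independence[OF _ assms(3,1)] by simp
qed

lemma mem_conjugate_iff:
  assumes "H \<subseteq> carrier G" and "g \<in> carrier G" and "x \<in> carrier G"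
  shows "x \<in> (g <# H) #> inv g \<longleftrightarrow> inv g \<otimes> x \<otimes> g \<in> H"
proof
  assume "x \<in> (g <# H) #> inv g"
  then obtain h where "h \<in> H" "x = g \<otimes> h \<otimes> inv g"
    unfolding l_coset_def r_coset_def by blast
  then show "inv g \<otimes> x \<otimes> g \<in> H"
    using assms by (simp add: m_assoc subsetD flip: m_assoc[of "inv g" g])
next
  assume "inv g \<otimes> x \<otimes> g \<in> H"
  moreover have "x = g \<otimes> (inv g \<otimes> x \<otimes> g) \<otimes> inv g"
    using assms by (simp add: m_assoc flip: m_assoc[of g "inv g"])
  ultimately show "x \<in> (g <# H) #> inv g"
    unfolding l_coset_def r_coset_def by blast
qed

lemma l_coset_mult_right_eq_iff:
  assumes H: "subgroup H G" and "a \<in> carrier G" "b \<in> carrier G" "g \<in> carrier G"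
  shows "(a \<otimes> g) <# H = (b \<otimes> g) <# H \<longleftrightarrow> inv b \<otimes> a \<in> (g <# H) #> inv g"
proof -
  have "inv (b \<otimes> g) \<otimes> (a \<otimes> g) = inv g \<otimes> (inv b \<otimes> a) \<otimes> g"
    using assms by (simp add: inv_mult_group m_assoc)
  then show ?thesis
    using assms l_coset_eq_iff[OF H] mem_conjugate_iff[OF subgroup.subset[OF H]] by simp
qed

lemma inj_on_l_coset_iff:
  assumes K: "subgroup K G" and H: "subgroup H G" and g: "g \<in> carrier G"
  shows "inj_on (\<lambda>\<kappa>. (\<kappa> \<otimes> g) <# H) K \<longleftrightarrow> K \<inter> ((g <# H) #> inv g) = {\<one>}"
proof -
  have KG: "K \<subseteq> carrier G" and HG: "H \<subseteq> carrier G"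
    using K H subgroup.subset by blast+
  note same_coset = l_coset_mult_right_eq_iff[OF H _ _ g]
  have one_conj: "\<one> \<in> (g <# H) #> inv g"
    using g HG subgroup.one_closed[OF H] by (simp add: mem_conjugate_iff)
  show ?thesis
  proof
    assume inj: "inj_on (\<lambda>\<kappa>. (\<kappa> \<otimes> g) <# H) K"
    show "K \<inter> ((g <# H) #> inv g) = {\<one>}"
    proof (intro equalityI subsetI)
      fix x
      assume x: "x \<in> K \<inter> ((g <# H) #> inv g)"
      then have "x \<in> carrier G"
        using KG by blast
      then have "(x \<otimes> g) <# H = (\<one> \<otimes> g) <# H"
        using x same_coset[of x \<one>] by simp
      then show "x \<in> {\<one>}"
        using inj_onD[OF inj _ _ subgroup.one_closed[OF K]] x by blast
    qed (use subgroup.one_closed[OF K] one_conj in blast)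
  next
    assume triv: "K \<inter> ((g <# H) #> inv g) = {\<one>}"
    show "inj_on (\<lambda>\<kappa>. (\<kappa> \<otimes> g) <# H) K"
    proof
      fix a b
      assume a: "a \<in> K" and b: "b \<in> K" and eq: "(a \<otimes> g) <# H = (b \<otimes> g) <# H"
      have ab: "a \<in> carrier G" "b \<in> carrier G"
        using a b KG by blast+
      have "inv b \<otimes> a \<in> K"
        using subgroup.m_closed[OF K subgroup.m_inv_closed[OF K b] a] .
      moreover have "inv b \<otimes> a \<in> (g <# H) #> inv g"
        using same_coset[OF ab] eq by simp
      ultimately have "inv b \<otimes> a \<in> K \<inter> ((g <# H) #> inv g)"
        by (rule IntI)
      then have "\<one> = inv b \<otimes> a"
        unfolding triv by simp
      then show "a = b"
        using ab by (simp add: inv_solve_left)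
    qed
  qed
qed

lemma r_coset_orbit_eq_iff:
  assumes K: "subgroup K G" and H: "subgroup H G" and x: "x \<in> carrier G" and y: "y \<in> carrier G"
  shows "(\<lambda>h. (K #> x) #> h) ` H = (\<lambda>h. (K #> y) #> h) ` H \<longleftrightarrow> (\<exists>\<kappa>\<in>K. \<exists>h\<in>H. x = \<kappa> \<otimes> y \<otimes> h)"
proof
  have KG: "K \<subseteq> carrier G" and HG: "H \<subseteq> carrier G"
    using K H subgroup.subset by blast+
  assume orbit_eq: "(\<lambda>h. (K #> x) #> h) ` H = (\<lambda>h. (K #> y) #> h) ` H"
  have "(K #> x) #> \<one> = K #> x"
    using coset_mult_one r_coset_subset_G[OF KG x] by blast
  then have "K #> x \<in> (\<lambda>h. (K #> x) #> h) ` H"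
    using subgroup.one_closed[OF H] by (metis image_eqI)
  then obtain h where h: "h \<in> H" and "K #> x = (K #> y) #> h"
    unfolding orbit_eq by blast
  then have "K #> x = K #> (y \<otimes> h)"
    using coset_mult_assoc[OF KG y] HG by blast
  then have "x \<in> K #> (y \<otimes> h)"
    using rcos_self[OF x K] by simp
  then obtain \<kappa> where "\<kappa> \<in> K" "x = \<kappa> \<otimes> (y \<otimes> h)"
    unfolding r_coset_def by blast
  then show "\<exists>\<kappa>\<in>K. \<exists>h\<in>H. x = \<kappa> \<otimes> y \<otimes> h"
    using h y KG HG by (metis m_assoc subsetD)
next
  have KG: "K \<subseteq> carrier G" and HG: "H \<subseteq> carrier G"
    using K H subgroup.subset by blast+
  assume "\<exists>\<kappa>\<in>K. \<exists>h\<in>H. x = \<kappa> \<otimes> y \<otimes> h"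
  then obtain \<kappa> h0 where \<kappa>: "\<kappa> \<in> K" and h0: "h0 \<in> H" and x_eq: "x = \<kappa> \<otimes> y \<otimes> h0"
    by blast
  have \<kappa>G: "\<kappa> \<in> carrier G" and h0G: "h0 \<in> carrier G"
    using \<kappa> h0 KG HG by blast+
  have "(K #> x) #> h = (K #> y) #> (h0 \<otimes> h)" if "h \<in> H" for h
  proof -
    have hG: "h \<in> carrier G"
      using that HG by blast
    have "(K #> x) #> h = (K #> \<kappa>) #> (y \<otimes> (h0 \<otimes> h))"
      using \<kappa>G y h0G hG x KG by (simp add: x_eq coset_mult_assoc m_assoc)
    also have "\<dots> = (K #> y) #> (h0 \<otimes> h)"
      using subgroup.rcos_const[OF K is_group \<kappa>] y h0G hG KG by (simp add: coset_mult_assoc)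
    finally show ?thesis .
  qed
  then have "(\<lambda>h. (K #> x) #> h) ` H = (\<lambda>h. (K #> y) #> h) ` (h0 <# H)"
    unfolding l_coset_def by (auto simp: image_iff)
  moreover have "h0 <# H = H"
    using l_coset_eq_iff[OF H h0G one_closed] lcos_mult_one[OF HG] h0 h0G by simp
  ultimately show "(\<lambda>h. (K #> x) #> h) ` H = (\<lambda>h. (K #> y) #> h) ` H"
    by simp
qed

end

lemma (in normal) conjugate_eq:
  assumes "g \<in> carrier G"
  shows "(g <# H) #> inv g = H"
  using assms coset_eq coset_mult_assoc[OF subset assms inv_closed[OF assms]] subset by simp

lemma (in group) generate_inter_eq_one_iff:
  assumes a: "a \<in> carrier G" and fin: "ord a \<noteq> 0" and H: "subgroup H G"
  shows "generate G {a} \<inter> H = {\<one>} \<longleftrightarrow> (\<forall>n::nat. a [^] n \<in> H \<longrightarrow> a [^] n = \<one>)"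
proof -
  have gen_range: "generate G {a} = range (\<lambda>n::nat. a [^] n)"
    using generate_pow_nat[OF a fin] by auto
  show ?thesis
  proof
    assume triv: "generate G {a} \<inter> H = {\<one>}"
    show "\<forall>n::nat. a [^] n \<in> H \<longrightarrow> a [^] n = \<one>"
    proof (intro allI impI)
      fix n :: nat
      assume "a [^] n \<in> H"
      then have "a [^] n \<in> generate G {a} \<inter> H"
        unfolding gen_range by simp
      then show "a [^] n = \<one>"
        using triv by simp
    qed
  next
    assume pow_in_H: "\<forall>n::nat. a [^] n \<in> H \<longrightarrow> a [^] n = \<one>"
    show "generate G {a} \<inter> H = {\<one>}"
    proof (intro equalityI subsetI)
      fix x
      assume "x \<in> generate G {a} \<inter> H"
      then show "x \<in> {\<one>}"
        using pow_in_H unfolding gen_range by auto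
    next
      fix x
      assume "x \<in> {\<one>}"
      then show "x \<in> generate G {a} \<inter> H"
        using generate.one subgroup.one_closed[OF H] by simp
    qed
  qed
qed

lemma (in normal) FactGroup_ord_dvd_iff:
  assumes a: "a \<in> carrier G"
  shows "group.ord (G Mod H) (H #> a) dvd n \<longleftrightarrow> a [^] n \<in> H"
proof -
  interpret Q: group "G Mod H"
    using factorgroup_is_group .
  have "H #> a \<in> carrier (G Mod H)"
    using a by (simp add: carrier_FactGroup rcosetsI subset)
  then have "Q.ord (H #> a) dvd n \<longleftrightarrow> H #> (a [^] n) = H"
    using Q.pow_eq_id[of "H #> a" n] FactGroup_pow[OF a, of n] by simp
  also have "\<dots> \<longleftrightarrow> a [^] n \<in> H"
    using rcos_const[OF is_group] rcos_self[OF nat_pow_closed[OF a] subgroup_axioms] by blast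
  finally show ?thesis .
qed

lemma (in normal) ord_FactGroup_eq_ord_iff:
  assumes a: "a \<in> carrier G" and fin: "ord a \<noteq> 0"
  shows "group.ord (G Mod H) (H #> a) = ord a \<longleftrightarrow> generate G {a} \<inter> H = {\<one>}"
proof -
  let ?q = "group.ord (G Mod H) (H #> a)"
  have "(\<forall>n::nat. a [^] n \<in> H \<longrightarrow> a [^] n = \<one>) \<longleftrightarrow> ord a dvd ?q"
  proof
    assume "\<forall>n::nat. a [^] n \<in> H \<longrightarrow> a [^] n = \<one>"
    moreover have "a [^] ?q \<in> H"
      using FactGroup_ord_dvd_iff[OF a, of ?q] by simp
    ultimately show "ord a dvd ?q"
      using pow_eq_id[OF a] by simp
  next
    assume ord_dvd: "ord a dvd ?q"
    show "\<forall>n::nat. a [^] n \<in> H \<longrightarrow> a [^] n = \<one>"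
    proof (intro allI impI)
      fix n :: nat
      assume "a [^] n \<in> H"
      then have "ord a dvd n"
        using FactGroup_ord_dvd_iff[OF a] ord_dvd dvd_trans by blast
      then show "a [^] n = \<one>"
        using pow_eq_id[OF a] by simp
    qed
  qed
  moreover have "ord a dvd ?q \<longleftrightarrow> ?q = ord a"
    using FactGroup_ord_dvd_iff[OF a, of "ord a"] pow_eq_id[OF a, of "ord a"]
      subgroup.one_closed[OF subgroup_axioms]
    by (auto intro: dvd_antisym)
  ultimately show ?thesis
    using generate_inter_eq_one_iff[OF a fin subgroup_axioms] by blast
qed

section \<open>The reduced-word model of \<open>G\<^sub>d\<^sub>,\<^sub>k\<close>\<close>

lemma reduced_word_Nil [simp]: "reduced_word d k []"
  by (simp add: reduced_word_def)

lemma reduced_word_Cons: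
  "reduced_word d k ((j, b) # w) \<longleftrightarrow>
     j \<le> d \<and> 0 < b \<and> b < k \<and> reduced_word d k w \<and> (w \<noteq> [] \<longrightarrow> fst (hd w) \<noteq> j)"
proof -
  have all_nat_split: "(\<forall>n. P n) \<longleftrightarrow> P 0 \<and> (\<forall>n. P (Suc n))" for P :: "nat \<Rightarrow> bool"
    using not0_implies_Suc by metis
  show ?thesis
    unfolding reduced_word_def by (subst all_nat_split) (cases w; auto)
qed

lemma ins_letter_mod: "ins_letter k i (a mod k) w = ins_letter k i a w"
  unfolding ins_letter_def by (auto split: list.splits simp: mod_add_left_eq)

lemma ins_letter_Nil: "ins_letter k i a [] = (if a mod k = 0 then [] else [(i, a mod k)])"
  by (simp add: ins_letter_def)

lemma ins_letter_zero: "a mod k = 0 \<Longrightarrow> ins_letter k i a w = w"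
  by (simp add: ins_letter_def)

lemma ins_letter_Cons_same:
  "0 < c \<Longrightarrow> c < k \<Longrightarrow>
    ins_letter k i a ((i, c) # w) = (if (a + c) mod k = 0 then w else (i, (a + c) mod k) # w)"
  unfolding ins_letter_def by (auto simp: mod_add_left_eq)

lemma ins_letter_Cons_other:
  "i \<noteq> j \<Longrightarrow> ins_letter k i a ((j, b) # w) = (if a mod k = 0 then (j, b) # w else (i, a mod k) # (j, b) # w)"
  by (simp add: ins_letter_def)

lemma ins_letter_reduced:
  "0 < k \<Longrightarrow> i \<le> d \<Longrightarrow> reduced_word d k w \<Longrightarrow> reduced_word d k (ins_letter k i a w)"
  unfolding ins_letter_def by (auto split: list.splits simp: reduced_word_Cons)

lemma ins_letter_Cons_reduced: "reduced_word d k ((i, a) # w) \<Longrightarrow> ins_letter k i a w = (i, a) # w"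
  unfolding ins_letter_def by (cases w) (auto simp: reduced_word_Cons)

lemma ins_letter_ins_letter:
  assumes "0 < k" and "reduced_word d k w"
  shows "ins_letter k i a (ins_letter k i b w) = ins_letter k i (a + b) w"
proof (cases w)
  case Nil
  then show ?thesis
    using assms(1) unfolding ins_letter_def by (auto simp: mod_add_left_eq mod_add_right_eq)
next
  case (Cons x w')
  obtain j c where w: "w = (j, c) # w'"
    using Cons by force
  have c: "0 < c" "c < k" and w': "w' \<noteq> [] \<longrightarrow> fst (hd w') \<noteq> j"
    using assms(2) by (auto simp: w reduced_word_Cons)
  show ?thesis
  proof (cases "j = i")
    case False
    then show ?thesis
      using assms(1) unfolding w ins_letter_def by (auto simp: mod_add_left_eq mod_add_right_eq)
  next
    case True
    have ins_w': "ins_letter k i e w' = (if e mod k = 0 then w' else (i, e mod k) # w')" for e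
      using w' True unfolding ins_letter_def by (cases w') auto
    have "(a + (b + c) mod k) mod k = (a + b + c) mod k" and "(b + c) mod k = 0 \<Longrightarrow> (a + b + c) mod k = a mod k"
      by (simp_all add: mod_add_right_eq add.assoc) (metis add.right_neutral mod_add_right_eq)
    then show ?thesis
      using c ins_w' unfolding w True by (simp add: ins_letter_Cons_same add.assoc)
  qed
qed

lemma word_mult_Nil [simp]: "word_mult k [] v = v"
  by (simp add: word_mult_def)

lemma word_mult_Cons [simp]: "word_mult k ((i, a) # u) v = ins_letter k i a (word_mult k u v)"
  by (simp add: word_mult_def)

lemma word_mult_reduced:
  "0 < k \<Longrightarrow> reduced_word d k u \<Longrightarrow> reduced_word d k v \<Longrightarrow> reduced_word d k (word_mult k u v)"
proof (induction u)
  case (Cons x u)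
  then show ?case
    by (cases x) (auto simp: reduced_word_Cons intro!: ins_letter_reduced)
qed simp

lemma word_mult_ins_letter:
  assumes k: "0 < k" and u: "reduced_word d k u" and v: "reduced_word d k v"
  shows "word_mult k (ins_letter k i a u) v = ins_letter k i a (word_mult k u v)"
proof (cases u)
  case Nil
  then show ?thesis
    by (cases "a mod k = 0") (simp_all add: ins_letter_Nil ins_letter_zero ins_letter_mod)
next
  case (Cons x u')
  obtain j b where u_eq: "u = (j, b) # u'"
    using Cons by force
  have u': "reduced_word d k u'" and b: "0 < b" "b < k"
    using u by (auto simp: u_eq reduced_word_Cons)
  have ins_ins: "ins_letter k i a (ins_letter k i b (word_mult k u' v)) = ins_letter k i (a + b) (word_mult k u' v)"
    using ins_letter_ins_letter[OF k word_mult_reduced[OF k u' v]] .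
  consider "a mod k = 0" | "a mod k \<noteq> 0" "i \<noteq> j" | "a mod k \<noteq> 0" "i = j"
    by blast
  then show ?thesis
  proof cases
    case 1
    then show ?thesis
      by (simp add: ins_letter_zero)
  next
    case 2
    then show ?thesis
      unfolding u_eq by (simp add: ins_letter_Cons_other ins_letter_mod)
  next
    case 3
    then show ?thesis
      using ins_ins b unfolding u_eq
      by (simp add: ins_letter_Cons_same ins_letter_zero ins_letter_mod)
  qed
qed

lemma word_mult_assoc:
  "0 < k \<Longrightarrow> reduced_word d k u \<Longrightarrow> reduced_word d k v \<Longrightarrow> reduced_word d k w \<Longrightarrow>
    word_mult k (word_mult k u v) w = word_mult k u (word_mult k v w)"
proof (induction u)
  case (Cons x u)
  obtain i a where x: "x = (i, a)"
    by force
  have u: "reduced_word d k u"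
    using Cons.prems(2) by (simp add: x reduced_word_Cons)
  show ?case
    using Cons.IH[OF Cons.prems(1) u Cons.prems(3,4)]
      word_mult_ins_letter[OF Cons.prems(1) word_mult_reduced[OF Cons.prems(1) u Cons.prems(3)] Cons.prems(4)]
    by (simp add: x)
qed simp

lemma word_mult_ins_letter_Nil: "word_mult k (ins_letter k i a []) w = ins_letter k i a w"
  by (cases "a mod k = 0") (simp_all add: ins_letter_Nil ins_letter_zero ins_letter_mod)

lemma word_mult_left_inverse_exists:
  assumes k: "0 < k"
  shows "reduced_word d k w \<Longrightarrow> \<exists>v. reduced_word d k v \<and> word_mult k v w = []"
proof (induction w)
  case Nil
  then show ?case
    by (intro exI[of _ "[]"]) simp
next
  case (Cons x u)
  obtain i a where x: "x = (i, a)"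
    by force
  have u: "reduced_word d k u" and ia: "i \<le> d" "0 < a" "a < k"
    using Cons.prems by (auto simp: x reduced_word_Cons)
  obtain v where v: "reduced_word d k v" "word_mult k v u = []"
    using Cons.IH[OF u] by blast
  have inv_a: "reduced_word d k [(i, k - a)]"
    using ia by (simp add: reduced_word_Cons)
  \<comment> \<open>the inverse of \<open>x # u\<close> is \<open>v\<close> followed by the letter \<open>(i, k - a)\<close>\<close>
  have "word_mult k (word_mult k v [(i, k - a)]) (x # u) =
      word_mult k v (ins_letter k i (k - a) (ins_letter k i a u))"
    using word_mult_assoc[OF k v(1) inv_a Cons.prems] ins_letter_Cons_reduced[of d k i a u] Cons.prems
    by (simp add: x)
  also have "\<dots> = []"
    using ins_letter_ins_letter[OF k u, of i "k - a" a] ia v(2) by (simp add: ins_letter_zero)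
  finally show ?case
    using word_mult_reduced[OF k v(1) inv_a] by blast
qed

lemma Gdk_carrier: "carrier (Gdk d k) = {w. reduced_word d k w}"
  by (simp add: Gdk_def)

lemma Gdk_mult: "x \<otimes>\<^bsub>Gdk d k\<^esub> y = word_mult k x y"
  by (simp add: Gdk_def)

lemma Gdk_one: "\<one>\<^bsub>Gdk d k\<^esub> = []"
  by (simp add: Gdk_def)

lemma Gdk_group: "0 < k \<Longrightarrow> group (Gdk d k)"
  by (rule groupI)
    (auto simp: Gdk_carrier Gdk_mult Gdk_one word_mult_reduced word_mult_assoc
      dest: word_mult_left_inverse_exists)

lemma alpha_carrier: "0 < k \<Longrightarrow> i \<le> d \<Longrightarrow> alpha k i \<in> carrier (Gdk d k)"
  unfolding alpha_def Gdk_carrier using ins_letter_reduced[of k i d "[]"] by simp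

lemma alpha_pow:
  assumes "0 < k" and "i \<le> d"
  shows "alpha k i [^]\<^bsub>Gdk d k\<^esub> n = ins_letter k i n []"
proof (induction n)
  case 0
  then show ?case
    by (simp add: Gdk_one ins_letter_Nil)
next
  case (Suc n)
  interpret group "Gdk d k"
    using Gdk_group[OF assms(1)] .
  have "alpha k i [^]\<^bsub>Gdk d k\<^esub> Suc n = alpha k i \<otimes>\<^bsub>Gdk d k\<^esub> alpha k i [^]\<^bsub>Gdk d k\<^esub> n"
    using nat_pow_Suc2 alpha_carrier[OF assms] by blast
  then show ?case
    using Suc ins_letter_ins_letter[OF assms(1) reduced_word_Nil, of i 1 n]
    by (simp add: Gdk_mult alpha_def word_mult_ins_letter_Nil)
qed

lemma ord_alpha:
  assumes "0 < k" and "i \<le> d"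
  shows "group.ord (Gdk d k) (alpha k i) = k"
proof -
  interpret group "Gdk d k"
    using Gdk_group[OF assms(1)] .
  show ?thesis
    using alpha_carrier[OF assms]
    by (simp add: ord_unique alpha_pow[OF assms] Gdk_one ins_letter_Nil mod_eq_0_iff_dvd)
qed

section \<open>Top multicells above a facet\<close>

lemma top_multicell_eq:
  assumes k: "0 < k" and x: "x \<in> carrier (Gdk d k)"
  shows "multicell d k H {0..d} x = ({0..d}, (\<lambda>y. {y}) ` (x <#\<^bsub>Gdk d k\<^esub> H))"
proof -
  interpret group "Gdk d k"
    using Gdk_group[OF k] .
  have "Ksub d k ({0..d} - {0..d}) = {\<one>\<^bsub>Gdk d k\<^esub>}"
    unfolding Ksub_def by (simp add: generate_empty)
  then have "(Ksub d k ({0..d} - {0..d}) #>\<^bsub>Gdk d k\<^esub> x) #>\<^bsub>Gdk d k\<^esub> h = {x \<otimes>\<^bsub>Gdk d k\<^esub> h}" for h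
    using x by (simp add: r_coset_def)
  then show ?thesis
    unfolding multicell_def cell_class_def l_coset_def by auto
qed

lemma top_cells_above_eq:
  assumes "I \<subseteq> {0..d}"
  shows "{\<tau> \<in> top_cells d k H. multicell_le d k H (multicell d k H I g) \<tau>} =
    {multicell d k H {0..d} x | x. x \<in> carrier (Gdk d k) \<and> cell_class d k H I x = cell_class d k H I g}"
proof (intro equalityI subsetI)
  fix \<tau>
  assume "\<tau> \<in> {\<tau> \<in> top_cells d k H. multicell_le d k H (multicell d k H I g) \<tau>}"
  then show "\<tau> \<in> {multicell d k H {0..d} x | x. x \<in> carrier (Gdk d k) \<and> cell_class d k H I x = cell_class d k H I g}"
    unfolding top_cells_def multicell_le_def by (auto simp: multicell_def)
next
  fix \<tau>
  assume "\<tau> \<in> {multicell d k H {0..d} x | x. x \<in> carrier (Gdk d k) \<and> cell_class d k H I x = cell_class d k H I g}"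
  then obtain x where "x \<in> carrier (Gdk d k)" "cell_class d k H I x = cell_class d k H I g"
    and "\<tau> = multicell d k H {0..d} x"
    by blast
  then show "\<tau> \<in> {\<tau> \<in> top_cells d k H. multicell_le d k H (multicell d k H I g) \<tau>}"
    using assms unfolding top_cells_def multicell_le_def by (auto simp: multicell_def)
qed

lemma facet_cell_class_eq:
  assumes "i \<le> d"
  shows "cell_class d k H ({0..d} - {i}) g =
    (\<lambda>h. (generate (Gdk d k) {alpha k i} #>\<^bsub>Gdk d k\<^esub> g) #>\<^bsub>Gdk d k\<^esub> h) ` H"
proof -
  have "{0..d} - ({0..d} - {i}) = {i}"
    using assms by auto
  then show ?thesis
    unfolding cell_class_def Ksub_def by auto
qed

lemma top_multicell_mult_right:
  assumes k: "0 < k" and H: "subgroup H (Gdk d k)"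
    and x: "x \<in> carrier (Gdk d k)" and h: "h \<in> H"
  shows "multicell d k H {0..d} (x \<otimes>\<^bsub>Gdk d k\<^esub> h) = multicell d k H {0..d} x"
proof -
  interpret group "Gdk d k"
    using Gdk_group[OF k] .
  have hG: "h \<in> carrier (Gdk d k)"
    using h subgroup.mem_carrier[OF H] by blast
  then have "inv\<^bsub>Gdk d k\<^esub> x \<otimes>\<^bsub>Gdk d k\<^esub> (x \<otimes>\<^bsub>Gdk d k\<^esub> h) = h"
    using x by (simp flip: m_assoc)
  then have "(x \<otimes>\<^bsub>Gdk d k\<^esub> h) <#\<^bsub>Gdk d k\<^esub> H = x <#\<^bsub>Gdk d k\<^esub> H"
    using l_coset_eq_iff[OF H] x hG h by simp
  then show ?thesis
    using top_multicell_eq[OF k] x hG by simp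
qed

lemma top_cells_above_facet_eq:
  assumes k: "0 < k" and i: "i \<le> d" and H: "subgroup H (Gdk d k)" and g: "g \<in> carrier (Gdk d k)"
  shows "{\<tau> \<in> top_cells d k H. multicell_le d k H (multicell d k H ({0..d} - {i}) g) \<tau>} =
    (\<lambda>\<kappa>. multicell d k H {0..d} (\<kappa> \<otimes>\<^bsub>Gdk d k\<^esub> g)) ` generate (Gdk d k) {alpha k i}"
    (is "_ = ?top ` ?K")
proof -
  interpret group "Gdk d k"
    using Gdk_group[OF k] .
  have K: "subgroup ?K (Gdk d k)"
    using generate_is_subgroup alpha_carrier[OF k i] by simp
  have \<kappa>g: "\<kappa> \<otimes>\<^bsub>Gdk d k\<^esub> g \<in> carrier (Gdk d k)" if "\<kappa> \<in> ?K" for \<kappa>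
    using that subgroup.mem_carrier[OF K] g by blast
  have same_facet: "cell_class d k H ({0..d} - {i}) x = cell_class d k H ({0..d} - {i}) g \<longleftrightarrow>
      (\<exists>\<kappa>\<in>?K. \<exists>h\<in>H. x = \<kappa> \<otimes>\<^bsub>Gdk d k\<^esub> g \<otimes>\<^bsub>Gdk d k\<^esub> h)" if "x \<in> carrier (Gdk d k)" for x
    unfolding facet_cell_class_eq[OF i] using r_coset_orbit_eq_iff[OF K H that g] .
  have facet_index: "{0..d} - {i} \<subseteq> {0..d}"
    by blast
  have "{multicell d k H {0..d} x | x. x \<in> carrier (Gdk d k) \<and>
      cell_class d k H ({0..d} - {i}) x = cell_class d k H ({0..d} - {i}) g} = ?top ` ?K"
  proof (intro equalityI subsetI)
    fix \<tau>
    assume "\<tau> \<in> {multicell d k H {0..d} x | x. x \<in> carrier (Gdk d k) \<and>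
        cell_class d k H ({0..d} - {i}) x = cell_class d k H ({0..d} - {i}) g}"
    then obtain \<kappa> h where \<kappa>: "\<kappa> \<in> ?K" and "h \<in> H"
      and "\<tau> = multicell d k H {0..d} (\<kappa> \<otimes>\<^bsub>Gdk d k\<^esub> g \<otimes>\<^bsub>Gdk d k\<^esub> h)"
      using same_facet by blast
    then have "\<tau> = ?top \<kappa>"
      using top_multicell_mult_right[OF k H \<kappa>g] by simp
    then show "\<tau> \<in> ?top ` ?K"
      using \<kappa> by blast
  next
    fix \<tau>
    assume "\<tau> \<in> ?top ` ?K"
    then obtain \<kappa> where \<kappa>: "\<kappa> \<in> ?K" and \<tau>: "\<tau> = ?top \<kappa>"
      by blast
    have "\<kappa> \<otimes>\<^bsub>Gdk d k\<^esub> g = \<kappa> \<otimes>\<^bsub>Gdk d k\<^esub> g \<otimes>\<^bsub>Gdk d k\<^esub> \<one>\<^bsub>Gdk d k\<^esub>"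
      using \<kappa>g[OF \<kappa>] by simp
    then have "cell_class d k H ({0..d} - {i}) (\<kappa> \<otimes>\<^bsub>Gdk d k\<^esub> g) = cell_class d k H ({0..d} - {i}) g"
      using same_facet[OF \<kappa>g[OF \<kappa>]] \<kappa> subgroup.one_closed[OF H] by blast
    then show "\<tau> \<in> {multicell d k H {0..d} x | x. x \<in> carrier (Gdk d k) \<and>
        cell_class d k H ({0..d} - {i}) x = cell_class d k H ({0..d} - {i}) g}"
      using \<tau> \<kappa>g[OF \<kappa>] by blast
  qed
  then show ?thesis
    unfolding top_cells_above_eq[OF facet_index] .
qed

lemma facet_degree_eq_k_iff:
  assumes k: "0 < k" and i: "i \<le> d" and H: "subgroup H (Gdk d k)" and g: "g \<in> carrier (Gdk d k)"
  shows "card {\<tau> \<in> top_cells d k H. multicell_le d k H (multicell d k H ({0..d} - {i}) g) \<tau>} = k \<longleftrightarrow>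
    generate (Gdk d k) {alpha k i} \<inter> ((g <#\<^bsub>Gdk d k\<^esub> H) #>\<^bsub>Gdk d k\<^esub> inv\<^bsub>Gdk d k\<^esub> g) = {\<one>\<^bsub>Gdk d k\<^esub>}"
proof -
  interpret group "Gdk d k"
    using Gdk_group[OF k] .
  let ?K = "generate (Gdk d k) {alpha k i}"
  let ?coset = "\<lambda>\<kappa>. (\<kappa> \<otimes>\<^bsub>Gdk d k\<^esub> g) <#\<^bsub>Gdk d k\<^esub> H"
  have K: "subgroup ?K (Gdk d k)"
    using generate_is_subgroup alpha_carrier[OF k i] by simp
  have card_K: "card ?K = k"
    using generate_pow_card[OF alpha_carrier[OF k i]] ord_alpha[OF k i] by simp
  then have "finite ?K"
    using k by (intro card_ge_0_finite) simp
  have "(\<lambda>\<kappa>. multicell d k H {0..d} (\<kappa> \<otimes>\<^bsub>Gdk d k\<^esub> g)) ` ?K = (\<lambda>C. ({0..d}, (\<lambda>y. {y}) ` C)) ` ?coset ` ?K"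
    using top_multicell_eq[OF k] subgroup.mem_carrier[OF K] g by (auto simp: image_image)
  moreover have "inj_on (\<lambda>C. ({0..d}, (\<lambda>y. {y}) ` C)) A" for A :: "(nat \<times> nat) list set set"
    by (rule inj_onI) (simp add: inj_image_eq_iff)
  ultimately have "card {\<tau> \<in> top_cells d k H. multicell_le d k H (multicell d k H ({0..d} - {i}) g) \<tau>} =
      card (?coset ` ?K)"
    unfolding top_cells_above_facet_eq[OF k i H g] by (simp add: card_image)
  also have "\<dots> = k \<longleftrightarrow> inj_on ?coset ?K"
    using inj_on_iff_eq_card[OF \<open>finite ?K\<close>] card_K by auto
  finally show ?thesis
    using inj_on_l_coset_iff[OF K H g] by simp
qed

lemma all_facet_degrees_eq_k_iff:
  assumes k: "0 < k" and H: "subgroup H (Gdk d k)"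
  shows "(\<forall>\<sigma> \<in> facet_cells d k H. card {\<tau> \<in> top_cells d k H. multicell_le d k H \<sigma> \<tau>} = k)
    \<longleftrightarrow> (\<forall>i \<le> d. \<forall>g \<in> carrier (Gdk d k).
           generate (Gdk d k) {alpha k i} \<inter>
             ((g <#\<^bsub>Gdk d k\<^esub> H) #>\<^bsub>Gdk d k\<^esub> inv\<^bsub>Gdk d k\<^esub> g) = {\<one>\<^bsub>Gdk d k\<^esub>})"
  unfolding facet_cells_def using facet_degree_eq_k_iff[OF k _ H] by blast

lemma normal_trivial_intersections_iff_ord:
  assumes k: "0 < k" and N: "H \<lhd> Gdk d k"
  shows "(\<forall>i \<le> d. \<forall>g \<in> carrier (Gdk d k).
           generate (Gdk d k) {alpha k i} \<inter>
             ((g <#\<^bsub>Gdk d k\<^esub> H) #>\<^bsub>Gdk d k\<^esub> inv\<^bsub>Gdk d k\<^esub> g) = {\<one>\<^bsub>Gdk d k\<^esub>})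
    \<longleftrightarrow> (\<forall>i \<le> d. group.ord (Gdk d k Mod H) (H #>\<^bsub>Gdk d k\<^esub> alpha k i) = k)"
proof -
  interpret normal H "Gdk d k"
    using N .
  have "(\<forall>i \<le> d. \<forall>g \<in> carrier (Gdk d k).
           generate (Gdk d k) {alpha k i} \<inter>
             ((g <#\<^bsub>Gdk d k\<^esub> H) #>\<^bsub>Gdk d k\<^esub> inv\<^bsub>Gdk d k\<^esub> g) = {\<one>\<^bsub>Gdk d k\<^esub>})
      \<longleftrightarrow> (\<forall>i \<le> d. generate (Gdk d k) {alpha k i} \<inter> H = {\<one>\<^bsub>Gdk d k\<^esub>})"
    using one_closed by (auto simp: conjugate_eq)
  also have "\<dots> \<longleftrightarrow> (\<forall>i \<le> d. group.ord (Gdk d k Mod H) (H #>\<^bsub>Gdk d k\<^esub> alpha k i) = k)"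
    using ord_FactGroup_eq_ord_iff[OF alpha_carrier[OF k]] ord_alpha[OF k] k by simp
  finally show ?thesis .
qed

theorem lemma9:
  fixes d k :: nat and H :: "(nat \<times> nat) list set"
  assumes "d \<ge> 1" and "k \<ge> 1"
    and "subgroup H (Gdk d k)"
  shows "((\<forall>\<sigma> \<in> facet_cells d k H. card {\<tau> \<in> top_cells d k H. multicell_le d k H \<sigma> \<tau>} = k)
          \<longleftrightarrow> (\<forall>i \<le> d. \<forall>g \<in> carrier (Gdk d k).
                 generate (Gdk d k) {alpha k i} \<inter>
                   ((g <#\<^bsub>Gdk d k\<^esub> H) #>\<^bsub>Gdk d k\<^esub> inv\<^bsub>Gdk d k\<^esub> g) = {\<one>\<^bsub>Gdk d k\<^esub>}))
       \<and> (H \<lhd> Gdk d k \<longrightarrow>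
          ((\<forall>\<sigma> \<in> facet_cells d k H. card {\<tau> \<in> top_cells d k H. multicell_le d k H \<sigma> \<tau>} = k)
           \<longleftrightarrow> (\<forall>i \<le> d. group.ord (Gdk d k Mod H) (H #>\<^bsub>Gdk d k\<^esub> alpha k i) = k)))"
proof -
  have k: "0 < k"
    using assms(2) by simp
  show ?thesis
    unfolding all_facet_degrees_eq_k_iff[OF k assms(3)]
    using normal_trivial_intersections_iff_ord[OF k] by simp
qed

end
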